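(* The set $\Gamma_{\mathcal{T}}$ of all finite branches that are not refutable in the tableau calculus $\mathcal{T}$ is an abstract consistency class.
   Context: Types: a countable set of base types including a distinguished $o$; other base types are sorts ($\alpha$). Types: base types and $\sigma\tau$ (functions from $\sigma$ to $\tau$; $\sigma\tau\mu=\sigma(\tau\mu)$). Countably many names, each with a unique type, infinitely many of each type. Terms: names; $st:\mu$ for $s:\tau\mu,t:\tau$; $\lambda x.t:\sigma\tau$ for a name $x:\sigma$, $t:\tau$. Logical constants: $\neg:oo$, $=_\sigma:\sigma\sigma o$; other names are variables. Formulas: terms of type $o$; $s=_\sigma t$ is $(=_\sigma s)t$; $s\neq_\sigma t$ is $\neg(s=_\sigma t)$. A fixed type-preserving total normalization operator $[\cdot]$ on terms is given; $s$ is normal iff $[s]=s$; $[[s]]=[s]$, $[[s]t]=[st]$, and $[xs_1\dots s_n]=x[s_1]\dots[s_n]$ for every name $x$, $n\ge0$, with $xs_1\dots s_n$ of base type. A branch is a set of normal formulas. Tableau calculus $\mathcal{T}$: a rule instance $A/A_1\dots A_n$ has $A$ a finite branch containing the premises, $A_i=A\cup$(formulas of the $i$-th alternative). Rules ($x$ a variable): (DN) $\neg\neg s$ / $s$. (BQ) $s=_ot$ / $\{s,t\}\mid\{\neg s,\neg t\}$. (BE) $s\neq_o t$ / $\{s,\neg t\}\mid\{\neg s,t\}$. (FQ) $s=_{\sigma\tau}t$ / $[su]=[tu]$, $u:\sigma$ normal. (FE) $s\neq_{\sigma\tau}t$ / $[sx]\neq[tx]$, $x:\sigma$ not free in $A$.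 (Mat) $xs_1\dots s_n,\neg xt_1\dots t_n$ / $s_1\neq t_1\mid\dots\mid s_n\neq t_n$ ($n\ge0$). (Dec) $xs_1\dots s_n\neq_\alpha xt_1\dots t_n$ / $s_1\neq t_1\mid\dots\mid s_n\neq t_n$ ($n\ge0$). (Con) $s=_\alpha t,u\neq_\alpha v$ / $\{s\neq u,t\neq u\}\mid\{s\neq v,t\neq v\}$. $A$ is closed if $x,\neg x\in A$ for a variable $x:o$ or $x\neq_\alpha x\in A$ for a variable $x:\alpha$. Restrictions: (1) instances with $A$ closed are admitted only for Mat or Dec with $n=0$; (2) FE on $s\neq t\in A$ only if no variable $x$ has $[sx]\neq[tx]\in A$. Refutable: least set of branches such that if $A/A_1\dots A_n$ is an admitted instance and all $A_i$ are refutable then $A$ is refutable. An abstract consistency class is a set $\Gamma$ of branches such that every $A\in\Gamma$ satisfies: (DN) if $\neg\neg s\in A$ then $A\cup\{s\}\in\Gamma$; (BQ) if $s=_ot\in A$ then $A\cup\{s,t\}\in\Gamma$ or $A\cup\{\neg s,\neg t\}\in\Gamma$; (BE) if $s\neq_ot\in A$ then $A\cup\{s,\neg t\}\in\Gamma$ or $A\cup\{\neg s,t\}\in\Gamma$; (FQ) if $s=_{\sigma\tau}t\in A$ then $A\cup\{[su]=[tu]\}\in\Gamma$ for every normal $u:\sigma$; (FE) if $s\neq_{\sigma\tau}t\in A$ then $A\cup\{[sx]\neq[tx]\}\in\Gamma$ for some variable $x$; (Mat) if $xs_1\dots s_n,\neg xt_1\dots t_n\in A$ then $n\ge1$ and $A\cup\{s_i\neq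 t_i\}\in\Gamma$ for some $i$; (Dec) if $xs_1\dots s_n\neq_\alpha xt_1\dots t_n\in A$ then $n\ge1$ and $A\cup\{s_i\neq t_i\}\in\Gamma$ for some $i$; (Con) if $s=_\alpha t,u\neq_\alpha v\in A$ then $A\cup\{s\neq u,t\neq u\}\in\Gamma$ or $A\cup\{s\neq v,t\neq v\}\in\Gamma$. *)

theory Defs
  imports Main
begin

datatype ty = Base nat | Fun ty ty

abbreviation oT :: ty where "oT \<equiv> Base 0"

definition is_sort :: "ty \<Rightarrow> bool" where
  "is_sort a \<longleftrightarrow> (\<exists>n. a = Base n \<and> n \<noteq> 0)"

datatype name = NVar nat ty | NNeg | NEq ty

fun nty :: "name \<Rightarrow> ty" where
  "nty (NVar n a) = a"
| "nty NNeg = Fun oT oT"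
| "nty (NEq a) = Fun a (Fun a oT)"

definition is_var :: "name \<Rightarrow> bool" where
  "is_var x \<longleftrightarrow> (\<exists>n a. x = NVar n a)"

datatype tm = Nm name | App tm tm | Lam name tm

fun tyof :: "tm \<Rightarrow> ty option" where
  "tyof (Nm x) = Some (nty x)"
| "tyof (App s t) = (case tyof s of
      Some (Fun a b) \<Rightarrow> (if tyof t = Some a then Some b else None)
    | _ \<Rightarrow> None)"
| "tyof (Lam x t) = map_option (Fun (nty x)) (tyof t)"

fun free :: "tm \<Rightarrow> name set" where
  "free (Nm x) = {x}"
| "free (App s t) = free s \<union> free t"
| "free (Lam x t) = free t - {x}"

definition apps :: "tm \<Rightarrow> tm list \<Rightarrow> tm" where
  "apps h ss = foldl App h ss"

definition Negf :: "tm \<Rightarrow> tm" where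
  "Negf s = App (Nm NNeg) s"

definition Eqf :: "ty \<Rightarrow> tm \<Rightarrow> tm \<Rightarrow> tm" where
  "Eqf a s t = App (App (Nm (NEq a)) s) t"

definition Neqf :: "ty \<Rightarrow> tm \<Rightarrow> tm \<Rightarrow> tm" where
  "Neqf a s t = Negf (Eqf a s t)"

text \<open>Properties required of the fixed normalization operator [.] (stated on terms,
  i.e. well-typed raw terms).\<close>
definition norm_op :: "(tm \<Rightarrow> tm) \<Rightarrow> bool" where
  "norm_op nf \<longleftrightarrow>
     (\<forall>s a. tyof s = Some a \<longrightarrow> tyof (nf s) = Some a)
   \<and> (\<forall>s. tyof s \<noteq> None \<longrightarrow> nf (nf s) = nf s)
   \<and> (\<forall>s t. tyof (App s t) \<noteq> None \<longrightarrow> nf (App (nf s) t) = nf (App s t))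
   \<and> (\<forall>x ss b. tyof (apps (Nm x) ss) = Some (Base b) \<longrightarrow>
          nf (apps (Nm x) ss) = apps (Nm x) (map nf ss))"

definition branch :: "(tm \<Rightarrow> tm) \<Rightarrow> tm set \<Rightarrow> bool" where
  "branch nf A \<longleftrightarrow> (\<forall>s\<in>A. tyof s = Some oT \<and> nf s = s)"

definition closed :: "tm set \<Rightarrow> bool" where
  "closed A \<longleftrightarrow>
     (\<exists>n. Nm (NVar n oT) \<in> A \<and> Negf (Nm (NVar n oT)) \<in> A)
   \<or> (\<exists>n a. is_sort a \<and> Neqf a (Nm (NVar n a)) (Nm (NVar n a)) \<in> A)"

section \<open>Tableau rules (instances A / A_1 ... A_n, alternatives as a list)\<close>

definition r_DN :: "tm set \<Rightarrow> tm set list \<Rightarrow> bool" where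
  "r_DN A As \<longleftrightarrow> (\<exists>s. Negf (Negf s) \<in> A \<and> As = [A \<union> {s}])"

definition r_BQ :: "tm set \<Rightarrow> tm set list \<Rightarrow> bool" where
  "r_BQ A As \<longleftrightarrow> (\<exists>s t. Eqf oT s t \<in> A \<and>
      As = [A \<union> {s, t}, A \<union> {Negf s, Negf t}])"

definition r_BE :: "tm set \<Rightarrow> tm set list \<Rightarrow> bool" where
  "r_BE A As \<longleftrightarrow> (\<exists>s t. Neqf oT s t \<in> A \<and>
      As = [A \<union> {s, Negf t}, A \<union> {Negf s, t}])"

definition r_FQ :: "(tm \<Rightarrow> tm) \<Rightarrow> tm set \<Rightarrow> tm set list \<Rightarrow> bool" where
  "r_FQ nf A As \<longleftrightarrow> (\<exists>a b s t u. Eqf (Fun a b) s t \<in> A \<and> tyof u = Some a \<and> nf u = u \<and>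
      As = [A \<union> {Eqf b (nf (App s u)) (nf (App t u))}])"

text \<open>FE together with restriction (2).\<close>
definition r_FE :: "(tm \<Rightarrow> tm) \<Rightarrow> tm set \<Rightarrow> tm set list \<Rightarrow> bool" where
  "r_FE nf A As \<longleftrightarrow> (\<exists>a b s t n. Neqf (Fun a b) s t \<in> A \<and>
      NVar n a \<notin> \<Union> (free ` A) \<and>
      \<not> (\<exists>m. Neqf b (nf (App s (Nm (NVar m a)))) (nf (App t (Nm (NVar m a)))) \<in> A) \<and>
      As = [A \<union> {Neqf b (nf (App s (Nm (NVar n a)))) (nf (App t (Nm (NVar n a))))}])"

definition neq_alts :: "tm set \<Rightarrow> tm list \<Rightarrow> tm list \<Rightarrow> tm set list" where
  "neq_alts A ss ts =
     map (\<lambda>i. A \<union> {Neqf (the (tyof (ss ! i))) (ss ! i) (ts ! i)}) [0..<length ss]"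

definition r_Mat :: "nat \<Rightarrow> tm set \<Rightarrow> tm set list \<Rightarrow> bool" where
  "r_Mat n A As \<longleftrightarrow> (\<exists>x ss ts. is_var x \<and> length ss = n \<and> length ts = n \<and>
      apps (Nm x) ss \<in> A \<and> Negf (apps (Nm x) ts) \<in> A \<and> As = neq_alts A ss ts)"

definition r_Dec :: "nat \<Rightarrow> tm set \<Rightarrow> tm set list \<Rightarrow> bool" where
  "r_Dec n A As \<longleftrightarrow> (\<exists>x ss ts a. is_var x \<and> is_sort a \<and> length ss = n \<and> length ts = n \<and>
      Neqf a (apps (Nm x) ss) (apps (Nm x) ts) \<in> A \<and> As = neq_alts A ss ts)"

definition r_Con :: "tm set \<Rightarrow> tm set list \<Rightarrow> bool" where
  "r_Con A As \<longleftrightarrow> (\<exists>a s t u v. is_sort a \<and> Eqf a s t \<in> A \<and> Neqf a u v \<in> A \<and>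
      As = [A \<union> {Neqf a s u, Neqf a t u}, A \<union> {Neqf a s v, Neqf a t v}])"

text \<open>Admitted rule instances: A a finite branch; restriction (1): for closed A only
  Mat or Dec with n = 0; restriction (2) is built into r_FE.\<close>
definition admitted :: "(tm \<Rightarrow> tm) \<Rightarrow> tm set \<Rightarrow> tm set list \<Rightarrow> bool" where
  "admitted nf A As \<longleftrightarrow> finite A \<and> branch nf A \<and>
     ((\<not> closed A \<and> (r_DN A As \<or> r_BQ A As \<or> r_BE A As \<or> r_FQ nf A As \<or> r_FE nf A As
        \<or> (\<exists>n. r_Mat n A As) \<or> (\<exists>n. r_Dec n A As) \<or> r_Con A As))
      \<or> r_Mat 0 A As \<or> r_Dec 0 A As)"

inductive refutable :: "(tm \<Rightarrow> tm) \<Rightarrow> tm set \<Rightarrow> bool" for nf where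
  "admitted nf A As \<Longrightarrow> (\<forall>B\<in>set As. refutable nf B) \<Longrightarrow> refutable nf A"

definition acc :: "(tm \<Rightarrow> tm) \<Rightarrow> tm set set \<Rightarrow> bool" where
  "acc nf G \<longleftrightarrow> (\<forall>A\<in>G. branch nf A
   \<and> (\<forall>s. Negf (Negf s) \<in> A \<longrightarrow> A \<union> {s} \<in> G)
   \<and> (\<forall>s t. Eqf oT s t \<in> A \<longrightarrow> A \<union> {s, t} \<in> G \<or> A \<union> {Negf s, Negf t} \<in> G)
   \<and> (\<forall>s t. Neqf oT s t \<in> A \<longrightarrow> A \<union> {s, Negf t} \<in> G \<or> A \<union> {Negf s, t} \<in> G)
   \<and> (\<forall>a b s t. Eqf (Fun a b) s t \<in> A \<longrightarrow>
        (\<forall>u. tyof u = Some a \<and> nf u = u \<longrightarrow> A \<union> {Eqf b (nf (App s u)) (nf (App t u))} \<in> G))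
   \<and> (\<forall>a b s t. Neqf (Fun a b) s t \<in> A \<longrightarrow>
        (\<exists>n. A \<union> {Neqf b (nf (App s (Nm (NVar n a)))) (nf (App t (Nm (NVar n a))))} \<in> G))
   \<and> (\<forall>x ss ts. is_var x \<and> length ss = length ts \<and>
        apps (Nm x) ss \<in> A \<and> Negf (apps (Nm x) ts) \<in> A \<longrightarrow>
        length ss \<ge> 1 \<and> (\<exists>i<length ss. A \<union> {Neqf (the (tyof (ss ! i))) (ss ! i) (ts ! i)} \<in> G))
   \<and> (\<forall>x ss ts a. is_var x \<and> is_sort a \<and> length ss = length ts \<and>
        Neqf a (apps (Nm x) ss) (apps (Nm x) ts) \<in> A \<longrightarrow>
        length ss \<ge> 1 \<and> (\<exists>i<length ss. A \<union> {Neqf (the (tyof (ss ! i))) (ss ! i) (ts ! i)} \<in> G))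
   \<and> (\<forall>a s t u v. is_sort a \<and> Eqf a s t \<in> A \<and> Neqf a u v \<in> A \<longrightarrow>
        A \<union> {Neqf a s u, Neqf a t u} \<in> G \<or> A \<union> {Neqf a s v, Neqf a t v} \<in> G))"

end

theory Submission
  imports Defs
begin

text \<open>If a rule applies to a finite branch that is not refutable, then the branch is not closed
  (a closed branch is refuted by Mat or Dec with n = 0 and no alternatives), so the rule instance
  is admitted; since the alternatives are again finite branches and at least one of them must be
  unrefutable, that alternative witnesses the corresponding closure condition of an abstract
  consistency class. For Mat and Dec with n = 0 there are no alternatives, which forces n \<ge> 1.
  Rule FE needs a fresh variable unless restriction (2) blocks it, in which case
  the required formula is already on the branch.\<close>

definition is_normal :: "(tm \<Rightarrow> tm) \<Rightarrow> ty \<Rightarrow> tm \<Rightarrow> bool" where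
  "is_normal nf a s \<longleftrightarrow> tyof s = Some a \<and> nf s = s"

definition unrefutable_branches :: "(tm \<Rightarrow> tm) \<Rightarrow> tm set set" where
  "unrefutable_branches nf = {A. finite A \<and> branch nf A \<and> \<not> refutable nf A}"

lemma branch_insert [simp]: "branch nf (insert s A) \<longleftrightarrow> is_normal nf oT s \<and> branch nf A"
  by (auto simp: branch_def is_normal_def)

lemma branch_memD: "branch nf A \<Longrightarrow> s \<in> A \<Longrightarrow> is_normal nf oT s"
  by (simp add: branch_def is_normal_def)

lemma tyof_App_Some:
  "tyof (App h s) = Some c \<longleftrightarrow> (\<exists>a. tyof h = Some (Fun a c) \<and> tyof s = Some a)"
  by (auto split: option.splits ty.splits if_splits)

lemma tyof_Negf: "tyof (Negf s) = Some c \<longleftrightarrow> c = oT \<and> tyof s = Some oT"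
  by (auto simp: Negf_def tyof_App_Some)

lemma tyof_Eqf: "tyof (Eqf a s t) = Some c \<longleftrightarrow> c = oT \<and> tyof s = Some a \<and> tyof t = Some a"
  by (auto simp: Eqf_def tyof_App_Some)

fun fun_ty :: "ty list \<Rightarrow> ty \<Rightarrow> ty" where
  "fun_ty [] c = c"
| "fun_ty (a # as) c = Fun a (fun_ty as c)"

lemma fun_ty_inj: "length as = length bs \<Longrightarrow> fun_ty as c = fun_ty bs d \<Longrightarrow> as = bs \<and> c = d"
  by (induction as bs rule: list_induct2) auto

lemma tyof_apps: "tyof (apps h ss) = Some c \<longleftrightarrow>
   (\<exists>as. list_all2 (\<lambda>s a. tyof s = Some a) ss as \<and> tyof h = Some (fun_ty as c))"
proof (induction ss arbitrary: h)
  case Nil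
  then show ?case by (simp add: apps_def)
next
  case (Cons s ss)
  have "apps h (s # ss) = apps (App h s) ss" by (simp add: apps_def)
  then show ?case
    using Cons by (auto simp: list_all2_Cons1 tyof_App_Some simp del: tyof.simps(2))
      (metis fun_ty.simps(2))
qed

lemma apps_inj: "length ss = length ts \<Longrightarrow> apps h ss = apps g ts \<Longrightarrow> h = g \<and> ss = ts"
proof (induction ss ts arbitrary: h g rule: list_induct2)
  case Nil
  then show ?case by (simp add: apps_def)
next
  case (Cons s ss t ts)
  then have "apps (App h s) ss = apps (App g t) ts" by (simp add: apps_def)
  with Cons.IH show ?case by auto
qed

lemma apps_args_same_type:
  assumes "tyof (apps (Nm x) ss) = Some c" "tyof (apps (Nm x) ts) = Some d"
    and "length ss = length ts" "i < length ss"
  shows "\<exists>a. tyof (ss ! i) = Some a \<and> tyof (ts ! i) = Some a"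
proof -
  obtain as where as: "list_all2 (\<lambda>s a. tyof s = Some a) ss as" "nty x = fun_ty as c"
    using assms(1) tyof_apps by auto
  obtain bs where bs: "list_all2 (\<lambda>s a. tyof s = Some a) ts bs" "nty x = fun_ty bs d"
    using assms(2) tyof_apps by auto
  have "length as = length bs"
    using as(1) bs(1) assms(3) by (simp add: list_all2_lengthD[symmetric])
  with as(2) bs(2) have "as = bs" using fun_ty_inj by metis
  then show ?thesis
    using list_all2_nthD[OF as(1) assms(4)] list_all2_nthD[OF bs(1)] assms(3,4) by auto
qed

lemma bex_set_neq_alts:
  "(\<exists>B\<in>set (neq_alts A ss ts). P B) \<longleftrightarrow>
   (\<exists>i<length ss. P (A \<union> {Neqf (the (tyof (ss ! i))) (ss ! i) (ts ! i)}))"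
  by (auto simp: neq_alts_def)

lemma finite_free: "finite (free t)"
  by (induction t) auto

lemma fresh_var: "finite A \<Longrightarrow> \<exists>n. NVar n a \<notin> \<Union> (free ` A)"
proof -
  assume "finite A"
  then have "finite (\<Union> (free ` A))" by (simp add: finite_free)
  then have "finite ((\<lambda>n. NVar n a) -` \<Union> (free ` A))"
    by (rule finite_vimageI) (simp add: inj_on_def)
  then obtain n where "n \<notin> (\<lambda>n. NVar n a) -` \<Union> (free ` A)"
    using infinite_UNIV_nat ex_new_if_finite by metis
  then show ?thesis by blast
qed

lemma closed_refutable:
  assumes "finite A" "branch nf A" "closed A"
  shows "refutable nf A"
proof (rule refutable.intros)
  show "admitted nf A []"
    using assms unfolding admitted_def closed_def r_Mat_def r_Dec_def
    by (auto simp: apps_def neq_alts_def is_var_def)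
qed simp

lemma unrefutable_branches_admitted:
  assumes "A \<in> unrefutable_branches nf"
    and "r_DN A As \<or> r_BQ A As \<or> r_BE A As \<or> r_FQ nf A As \<or> r_FE nf A As
      \<or> r_Mat n A As \<or> r_Dec n A As \<or> r_Con A As"
  shows "admitted nf A As"
proof -
  have "finite A" "branch nf A" "\<not> closed A"
    using assms(1) closed_refutable unfolding unrefutable_branches_def by auto
  then show ?thesis using assms(2) unfolding admitted_def by blast
qed

context
  fixes nf :: "tm \<Rightarrow> tm"
  assumes nf: "norm_op nf"
begin

lemma nf_apps:
  "tyof (apps (Nm x) ss) = Some (Base b) \<Longrightarrow> nf (apps (Nm x) ss) = apps (Nm x) (map nf ss)"
  using nf unfolding norm_op_def by blast

lemma is_normal_nf_App:
  assumes "tyof u = Some a" "is_normal nf (Fun a b) s"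
  shows "is_normal nf b (nf (App s u))"
proof -
  have "tyof (App s u) = Some b" using assms by (simp add: is_normal_def)
  then show ?thesis using nf unfolding norm_op_def is_normal_def by auto
qed

lemma is_normal_Negf [simp]: "is_normal nf oT (Negf s) \<longleftrightarrow> is_normal nf oT s"
proof -
  have "tyof s = Some oT \<Longrightarrow> nf (Negf s) = Negf (nf s)"
    using nf_apps[of NNeg "[s]" 0] by (simp add: Negf_def apps_def)
  then show ?thesis by (auto simp: is_normal_def tyof_Negf Negf_def)
qed

lemma is_normal_Eqf [simp]: "is_normal nf oT (Eqf a s t) \<longleftrightarrow> is_normal nf a s \<and> is_normal nf a t"
proof -
  have "tyof s = Some a \<Longrightarrow> tyof t = Some a \<Longrightarrow> nf (Eqf a s t) = Eqf a (nf s) (nf t)"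
    using nf_apps[of "NEq a" "[s, t]" 0] by (simp add: Eqf_def apps_def)
  then show ?thesis by (auto simp: is_normal_def tyof_Eqf Eqf_def)
qed

lemma is_normal_Neqf [simp]: "is_normal nf oT (Neqf a s t) \<longleftrightarrow> is_normal nf a s \<and> is_normal nf a t"
  by (simp add: Neqf_def)

lemma is_normal_apps_args:
  assumes "is_normal nf (Base b) (apps (Nm x) ss)" "s \<in> set ss"
  shows "nf s = s"
proof -
  have "apps (Nm x) (map nf ss) = apps (Nm x) ss"
    using assms(1) nf_apps[of x ss b] by (simp add: is_normal_def)
  then have "map nf ss = ss" using apps_inj by simp
  then show ?thesis using assms(2) by (metis map_eq_conv id_apply list.map_id)
qed

lemma neq_alts_branch:
  assumes "branch nf A" "length ss = length ts"
    and "is_normal nf (Base b) (apps (Nm x) ss)" "is_normal nf (Base b) (apps (Nm x) ts)"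
    and "B \<in> set (neq_alts A ss ts)"
  shows "branch nf B"
proof -
  obtain i where i: "i < length ss" "B = A \<union> {Neqf (the (tyof (ss ! i))) (ss ! i) (ts ! i)}"
    using assms(5) by (auto simp: neq_alts_def)
  obtain a where "tyof (ss ! i) = Some a" "tyof (ts ! i) = Some a"
    using apps_args_same_type[of x ss _ ts _ i] assms(2-4) i(1) by (auto simp: is_normal_def)
  moreover have "nf (ss ! i) = ss ! i" "nf (ts ! i) = ts ! i"
    using is_normal_apps_args assms(2-4) i(1) by auto
  ultimately have "is_normal nf a (ss ! i)" "is_normal nf a (ts ! i)"
    by (simp_all add: is_normal_def)
  then show ?thesis using assms(1) i(2) by (simp add: \<open>tyof (ss ! i) = Some a\<close>)
qed

lemma admitted_alternative_branch:
  assumes "admitted nf A As" "B \<in> set As"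
  shows "finite B \<and> branch nf B"
proof -
  have A: "finite A" "branch nf A" using assms(1) by (simp_all add: admitted_def)
  have finite_neq_alts: "B \<in> set (neq_alts A ss ts) \<Longrightarrow> finite B" for ss ts
    using A(1) by (auto simp: neq_alts_def)
  have "r_DN A As \<or> r_BQ A As \<or> r_BE A As \<or> r_FQ nf A As \<or> r_FE nf A As
      \<or> (\<exists>n. r_Mat n A As) \<or> (\<exists>n. r_Dec n A As) \<or> r_Con A As"
    using assms(1) by (auto simp: admitted_def)
  then show ?thesis
  proof (elim disjE exE)
    fix n assume "r_Mat n A As"
    then obtain x ss ts where "length ss = length ts" "apps (Nm x) ss \<in> A"
      "Negf (apps (Nm x) ts) \<in> A" "As = neq_alts A ss ts"
      unfolding r_Mat_def by metis
    moreover have "is_normal nf oT (apps (Nm x) ts)"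
      using branch_memD[OF A(2) \<open>Negf (apps (Nm x) ts) \<in> A\<close>] by simp
    ultimately show ?thesis
      using neq_alts_branch[of A ss ts 0 x B] branch_memD[OF A(2)] A(2) assms(2) finite_neq_alts
      by auto
  next
    fix n assume "r_Dec n A As"
    then obtain x ss ts k where "length ss = length ts" "As = neq_alts A ss ts"
      "Neqf (Base k) (apps (Nm x) ss) (apps (Nm x) ts) \<in> A"
      unfolding r_Dec_def is_sort_def by metis
    then show ?thesis
      using neq_alts_branch[of A ss ts k x B] branch_memD[OF A(2)] A(2) assms(2) finite_neq_alts
      by fastforce
  next
    assume "r_FE nf A As"
    then obtain a b s t n where "Neqf (Fun a b) s t \<in> A"
      "As = [A \<union> {Neqf b (nf (App s (Nm (NVar n a)))) (nf (App t (Nm (NVar n a))))}]"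
      unfolding r_FE_def by blast
    moreover from this(1) have "is_normal nf (Fun a b) s" "is_normal nf (Fun a b) t"
      using branch_memD[OF A(2)] by fastforce+
    ultimately show ?thesis using A assms(2) is_normal_nf_App[of "Nm (NVar n a)" a] by auto
  qed (use A assms(2) in \<open>auto simp: r_DN_def r_BQ_def r_BE_def r_FQ_def r_Con_def
      dest!: branch_memD[OF A(2)] intro: is_normal_nf_App\<close>)
qed

lemma unrefutable_branches_alternative:
  assumes "A \<in> unrefutable_branches nf" "admitted nf A As"
  shows "\<exists>B\<in>set As. B \<in> unrefutable_branches nf"
proof -
  have "\<not> refutable nf A" using assms(1) by (simp add: unrefutable_branches_def)
  then obtain B where "B \<in> set As" "\<not> refutable nf B"
    using assms(2) refutable.intros by blast
  with admitted_alternative_branch[OF assms(2)] show ?thesis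
    unfolding unrefutable_branches_def by blast
qed

lemma unrefutable_branches_rule:
  assumes "A \<in> unrefutable_branches nf"
    and "r_DN A As \<or> r_BQ A As \<or> r_BE A As \<or> r_FQ nf A As \<or> r_FE nf A As
      \<or> r_Mat n A As \<or> r_Dec n A As \<or> r_Con A As"
  shows "\<exists>B\<in>set As. B \<in> unrefutable_branches nf"
  by (rule unrefutable_branches_alternative[OF assms(1) unrefutable_branches_admitted[OF assms]])

lemma unrefutable_branches_DN:
  assumes "A \<in> unrefutable_branches nf" "Negf (Negf s) \<in> A"
  shows "A \<union> {s} \<in> unrefutable_branches nf"
proof -
  have "r_DN A [A \<union> {s}]"
    unfolding r_DN_def using assms(2) by blast
  then have "\<exists>B\<in>set [A \<union> {s}]. B \<in> unrefutable_branches nf"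
    using unrefutable_branches_rule[OF assms(1)] by blast
  then show ?thesis by simp
qed

lemma unrefutable_branches_BQ:
  assumes "A \<in> unrefutable_branches nf" "Eqf oT s t \<in> A"
  shows "A \<union> {s, t} \<in> unrefutable_branches nf \<or> A \<union> {Negf s, Negf t} \<in> unrefutable_branches nf"
proof -
  have "r_BQ A [A \<union> {s, t}, A \<union> {Negf s, Negf t}]"
    unfolding r_BQ_def using assms(2) by blast
  then have "\<exists>B\<in>set [A \<union> {s, t}, A \<union> {Negf s, Negf t}]. B \<in> unrefutable_branches nf"
    using unrefutable_branches_rule[OF assms(1)] by blast
  then show ?thesis by simp
qed

lemma unrefutable_branches_BE:
  assumes "A \<in> unrefutable_branches nf" "Neqf oT s t \<in> A"
  shows "A \<union> {s, Negf t} \<in> unrefutable_branches nf \<or> A \<union> {Negf s, t} \<in> unrefutable_branches nf"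
proof -
  have "r_BE A [A \<union> {s, Negf t}, A \<union> {Negf s, t}]"
    unfolding r_BE_def using assms(2) by blast
  then have "\<exists>B\<in>set [A \<union> {s, Negf t}, A \<union> {Negf s, t}]. B \<in> unrefutable_branches nf"
    using unrefutable_branches_rule[OF assms(1)] by blast
  then show ?thesis by simp
qed

lemma unrefutable_branches_FQ:
  assumes "A \<in> unrefutable_branches nf" "Eqf (Fun a b) s t \<in> A" "tyof u = Some a" "nf u = u"
  shows "A \<union> {Eqf b (nf (App s u)) (nf (App t u))} \<in> unrefutable_branches nf"
proof -
  have "r_FQ nf A [A \<union> {Eqf b (nf (App s u)) (nf (App t u))}]"
    unfolding r_FQ_def using assms(2-) by blast
  then have "\<exists>B\<in>set [A \<union> {Eqf b (nf (App s u)) (nf (App t u))}]. B \<in> unrefutable_branches nf"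
    using unrefutable_branches_rule[OF assms(1)] by blast
  then show ?thesis by simp
qed

lemma unrefutable_branches_FE:
  assumes "A \<in> unrefutable_branches nf" "Neqf (Fun a b) s t \<in> A"
  shows "\<exists>n. A \<union> {Neqf b (nf (App s (Nm (NVar n a)))) (nf (App t (Nm (NVar n a))))}
           \<in> unrefutable_branches nf"
proof (cases "\<exists>m. Neqf b (nf (App s (Nm (NVar m a)))) (nf (App t (Nm (NVar m a)))) \<in> A")
  case True
  then show ?thesis using assms(1) by (metis insert_absorb Un_insert_right sup_bot.right_neutral)
next
  case False
  obtain n where n: "NVar n a \<notin> \<Union> (free ` A)"
    using fresh_var[of A a] assms(1) unfolding unrefutable_branches_def by blast
  let ?B = "A \<union> {Neqf b (nf (App s (Nm (NVar n a)))) (nf (App t (Nm (NVar n a))))}"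
  have "r_FE nf A [?B]"
    unfolding r_FE_def using assms(2) n False by blast
  then have "\<exists>B\<in>set [?B]. B \<in> unrefutable_branches nf"
    using unrefutable_branches_rule[OF assms(1)] by blast
  then show ?thesis by auto
qed

lemma unrefutable_branches_Mat:
  assumes "A \<in> unrefutable_branches nf" "is_var x" "length ss = length ts"
    and "apps (Nm x) ss \<in> A" "Negf (apps (Nm x) ts) \<in> A"
  shows "length ss \<ge> 1 \<and>
    (\<exists>i<length ss. A \<union> {Neqf (the (tyof (ss ! i))) (ss ! i) (ts ! i)} \<in> unrefutable_branches nf)"
proof -
  have "r_Mat (length ss) A (neq_alts A ss ts)"
    unfolding r_Mat_def using assms(2-) by force
  then have "\<exists>B\<in>set (neq_alts A ss ts). B \<in> unrefutable_branches nf"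
    using unrefutable_branches_rule[OF assms(1)] by blast
  then show ?thesis unfolding bex_set_neq_alts by auto
qed

lemma unrefutable_branches_Dec:
  assumes "A \<in> unrefutable_branches nf" "is_var x" "is_sort a" "length ss = length ts"
    and "Neqf a (apps (Nm x) ss) (apps (Nm x) ts) \<in> A"
  shows "length ss \<ge> 1 \<and>
    (\<exists>i<length ss. A \<union> {Neqf (the (tyof (ss ! i))) (ss ! i) (ts ! i)} \<in> unrefutable_branches nf)"
proof -
  have "r_Dec (length ss) A (neq_alts A ss ts)"
    unfolding r_Dec_def using assms(2-) by force
  then have "\<exists>B\<in>set (neq_alts A ss ts). B \<in> unrefutable_branches nf"
    using unrefutable_branches_rule[OF assms(1)] by blast
  then show ?thesis unfolding bex_set_neq_alts by auto
qed

lemma unrefutable_branches_Con: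
  assumes "A \<in> unrefutable_branches nf" "is_sort a" "Eqf a s t \<in> A" "Neqf a u v \<in> A"
  shows "A \<union> {Neqf a s u, Neqf a t u} \<in> unrefutable_branches nf
    \<or> A \<union> {Neqf a s v, Neqf a t v} \<in> unrefutable_branches nf"
proof -
  have "r_Con A [A \<union> {Neqf a s u, Neqf a t u}, A \<union> {Neqf a s v, Neqf a t v}]"
    unfolding r_Con_def using assms(2-) by blast
  then have "\<exists>B\<in>set [A \<union> {Neqf a s u, Neqf a t u}, A \<union> {Neqf a s v, Neqf a t v}].
      B \<in> unrefutable_branches nf"
    using unrefutable_branches_rule[OF assms(1)] by blast
  then show ?thesis by simp
qed

end

theorem lemma9p1:
  assumes "norm_op nf"
  shows "acc nf {A. finite A \<and> branch nf A \<and> \<not> refutable nf A}"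
  unfolding acc_def unrefutable_branches_def[symmetric]
  apply (intro ballI conjI)
  subgoal by (simp add: unrefutable_branches_def)
  subgoal using unrefutable_branches_DN[OF assms] by blast
  subgoal using unrefutable_branches_BQ[OF assms] by blast
  subgoal using unrefutable_branches_BE[OF assms] by blast
  subgoal using unrefutable_branches_FQ[OF assms] by blast
  subgoal using unrefutable_branches_FE[OF assms] by blast
  subgoal using unrefutable_branches_Mat[OF assms] by blast
  subgoal using unrefutable_branches_Dec[OF assms] by blast
  subgoal using unrefutable_branches_Con[OF assms] by blast
  done

end
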